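(* Assume $g$ satisfies (Hg). Let $a\in(0,1)$ and $k>1$, and define $$d^+(a,k):=\max_{y\in(1-a,1)}\frac{-g(1-y;a)}{ky},\qquad d^*(a,k):=(1-k^{-1/2})^{-2}\,d^+(a,k).$$ Then for every $d>d^*(a,k)$ we have $c(a,d,k)<0$.
   Context: A function $g:\mathbb R\times[0,1]\to\mathbb R$, $(u,a)\mapsto g(u;a)$, satisfies (Hg) if it is $C^1$ and for every $a\in(0,1)$: $g(0;a)=g(a;a)=g(1;a)=0$, $g'(0;a)<0$, $g'(1;a)<0$, $g'(a;a)>0$ (where $g'=\partial_u g$), $g(v;a)>0$ for $v\in(-\infty,0)\cup(a,1)$ and $g(v;a)<0$ for $v\in(0,a)\cup(1,\infty)$. For $k>0$, $a\in(0,1)$, $d>0$ consider the traveling wave problem: find $c\in\mathbb R$ and $\Phi:\mathbb R\to\mathbb R$ with $$-c\Phi'(\xi)=d\big(k\Phi(\xi+1)-(k+1)\Phi(\xi)+\Phi(\xi-1)\big)+g(\Phi(\xi);a)\quad(\xi\in\mathbb R),\qquad \lim_{\xi\to-\infty}\Phi(\xi)=0,\ \lim_{\xi\to+\infty}\Phi(\xi)=1.$$ It is known (Mallet-Paret) that under (Hg) this problem has a solution with $\Phi$ non-decreasing and that the speed $c$ is uniquely determined; it is denoted $c(a,d,k)$. *)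

theory Defs
  imports "HOL-Analysis.Analysis"
begin

text \<open>Hypothesis (Hg). g u a is written g(u;a); the u-derivative is deriv (\<lambda>v. g v a) u.
  C^1 on R x [0,1]: the uncurried map has a Frechet derivative (relative to the closed
  strip) that depends continuously on the point.\<close>
definition Hg :: "(real \<Rightarrow> real \<Rightarrow> real) \<Rightarrow> bool" where
  "Hg g \<longleftrightarrow>
     (\<exists>G :: real \<times> real \<Rightarrow> (real \<times> real) \<Rightarrow>\<^sub>L real.
        (\<forall>p \<in> UNIV \<times> {0..1}. ((\<lambda>q. g (fst q) (snd q)) has_derivative blinfun_apply (G p))
                                 (at p within UNIV \<times> {0..1}))
      \<and> continuous_on (UNIV \<times> {0..1}) G)
   \<and> (\<forall>a \<in> {0<..<1}.
        g 0 a = 0 \<and> g a a = 0 \<and> g 1 a = 0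
      \<and> deriv (\<lambda>v. g v a) 0 < 0 \<and> deriv (\<lambda>v. g v a) 1 < 0 \<and> deriv (\<lambda>v. g v a) a > 0
      \<and> (\<forall>v. (v < 0 \<or> (a < v \<and> v < 1)) \<longrightarrow> g v a > 0)
      \<and> (\<forall>v. ((0 < v \<and> v < a) \<or> 1 < v) \<longrightarrow> g v a < 0))"

definition tw_solution ::
  "(real \<Rightarrow> real \<Rightarrow> real) \<Rightarrow> real \<Rightarrow> real \<Rightarrow> real \<Rightarrow> real \<Rightarrow> (real \<Rightarrow> real) \<Rightarrow> bool" where
  "tw_solution g a d k c \<Phi> \<longleftrightarrow>
     (\<exists>\<Phi>'. \<forall>\<xi>. (\<Phi> has_real_derivative \<Phi>' \<xi>) (at \<xi>) \<and>
        - c * \<Phi>' \<xi> = d * (k * \<Phi> (\<xi> + 1) - (k + 1) * \<Phi> \<xi> + \<Phi> (\<xi> - 1)) + g (\<Phi> \<xi>) a)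
   \<and> (\<Phi> \<longlongrightarrow> 0) at_bot \<and> (\<Phi> \<longlongrightarrow> 1) at_top"

definition d_plus :: "(real \<Rightarrow> real \<Rightarrow> real) \<Rightarrow> real \<Rightarrow> real \<Rightarrow> real" where
  "d_plus g a k = (SUP y \<in> {1 - a<..<1}. - g (1 - y) a / (k * y))"

definition d_star :: "(real \<Rightarrow> real \<Rightarrow> real) \<Rightarrow> real \<Rightarrow> real \<Rightarrow> real" where
  "d_star g a k = d_plus g a k / (1 - 1 / sqrt k) ^ 2"

end

theory Submission
  imports Defs
begin

text \<open>Suppose c \<ge> 0. As \<Phi> is non-decreasing, the wave equation yields
  d (k \<Phi>(\<xi>+1) - (k+1) \<Phi>(\<xi>) + \<Phi>(\<xi>-1)) + g(\<Phi>(\<xi>); a) \<le> 0, and y = 1 - \<Phi> takes values in [0,1].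
  By the definition of d^+ we have g(\<Phi>; a) \<ge> -k d^+ y, so y is a supersolution
  \<beta> y(\<xi>) \<le> k y(\<xi>+1) + y(\<xi>-1) with \<beta> = k + 1 - k d^+/d, and \<beta> > 2 \<surd>k precisely when d > d^*.
  Where \<Phi> > a the nonlinearity is nonnegative, and telescoping the equation towards +\<infinity>
  gives k y(\<xi>) \<le> y(\<xi>-1) there; hence w(\<xi>) = y(\<xi>) k^(\<xi>/2) is bounded. Its supremum S satisfies
  \<beta> S \<le> 2 \<surd>k S, so S = 0 and \<Phi> \<equiv> 1, contradicting \<Phi> \<rightarrow> 0 at -\<infinity>.\<close>

lemma Hg_continuous_on:
  assumes "Hg g" "a \<in> {0..1}"
  shows "continuous_on UNIV (\<lambda>u. g u a)"
proof -
  from assms(1) obtain G :: "real \<times> real \<Rightarrow> (real \<times> real) \<Rightarrow>\<^sub>L real" where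
    G: "\<forall>p \<in> UNIV \<times> {0..1}. ((\<lambda>q. g (fst q) (snd q)) has_derivative blinfun_apply (G p))
                              (at p within UNIV \<times> {0..1})"
    unfolding Hg_def by blast
  show ?thesis
  proof (rule continuous_at_imp_continuous_on, intro ballI)
    fix u :: real
    have "continuous (at (u, a) within UNIV \<times> {0..1}) (\<lambda>q. g (fst q) (snd q))"
      using G assms(2) by (intro has_derivative_continuous[of _ "blinfun_apply (G (u, a))"]) auto
    then have "continuous (at (u, a) within range (\<lambda>u. (u, a))) (\<lambda>q. g (fst q) (snd q))"
      by (rule continuous_within_subset) (use assms(2) in auto)
    moreover have "continuous (at u within UNIV) (\<lambda>u. (u, a))" by (intro continuous_intros)
    ultimately show "isCont (\<lambda>u. g u a) u"
      using continuous_within_compose2 by (fastforce simp: o_def)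
  qed
qed

lemma Hg_neg:
  assumes "Hg g" "0 < v" "v < a" "a < 1"
  shows "g v a < 0"
  using assms unfolding Hg_def by auto

lemma Hg_nonneg:
  assumes "Hg g" "0 < a" "a < 1" and v: "v = 0 \<or> a \<le> v \<and> v \<le> 1"
  shows "0 \<le> g v a"
proof -
  have "g 0 a = 0" "g a a = 0" "g 1 a = 0" "\<And>v. a < v \<Longrightarrow> v < 1 \<Longrightarrow> 0 < g v a"
    using assms(1-3) unfolding Hg_def by auto
  with v show ?thesis
    by (cases "v = a \<or> v = 1") (auto simp: order.order_iff_strict)
qed

lemma bdd_above_d_plus:
  assumes "Hg g" "0 < a" "a < 1" "0 < k"
  shows "bdd_above ((\<lambda>y. - g (1 - y) a / (k * y)) ` {1 - a<..<1})"
proof -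
  have "continuous_on {0..1} (\<lambda>u. g u a)"
    by (rule continuous_on_subset[OF Hg_continuous_on[OF assms(1)]]) (use assms(2,3) in auto)
  then obtain B where B: "\<And>u. u \<in> {0..1} \<Longrightarrow> norm (g u a) \<le> B"
    using continuous_on_compact_bound[OF compact_Icc] by blast
  have "- g (1 - y) a / (k * y) \<le> B / (k * (1 - a))" if y: "1 - a < y" "y < 1" for y
  proof -
    have "0 \<le> B" "- g (1 - y) a \<le> B" using B[of "1 - y"] y assms(2,3) by auto
    then have "- g (1 - y) a / (k * y) \<le> B / (k * y)"
      using y assms(3,4) by (intro divide_right_mono) auto
    also have "\<dots> \<le> B / (k * (1 - a))"
      using y assms(3,4) \<open>0 \<le> B\<close> by (intro divide_left_mono mult_left_mono mult_pos_pos) auto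
    finally show ?thesis .
  qed
  then show ?thesis by (intro bdd_aboveI2) auto
qed

lemma d_plus_pos:
  assumes "Hg g" "0 < a" "a < 1" "0 < k"
  shows "0 < d_plus g a k"
proof -
  have "g (a / 2) a < 0" using Hg_neg[OF assms(1)] assms(2,3) by auto
  then have "0 < - g (1 - (1 - a / 2)) a / (k * (1 - a / 2))"
    using assms(3,4) by (intro divide_pos_pos) auto
  also have "\<dots> \<le> d_plus g a k"
    unfolding d_plus_def using bdd_above_d_plus[OF assms] assms(2)
    by (intro cSUP_upper) auto
  finally show ?thesis .
qed

lemma d_plus_lower_bound:
  assumes "Hg g" "0 < a" "a < 1" "0 < k" "0 \<le> v" "v \<le> 1"
  shows "- (k * d_plus g a k) * (1 - v) \<le> g v a"
proof (cases "0 < v \<and> v < a")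
  case True
  then have "- g (1 - (1 - v)) a / (k * (1 - v)) \<le> d_plus g a k"
    unfolding d_plus_def using bdd_above_d_plus[OF assms(1-4)] by (intro cSUP_upper) auto
  with True assms(3,4) show ?thesis
    by (simp add: divide_le_eq mult_ac del: divide_minus_left)
next
  case False
  then have "0 \<le> g v a" using Hg_nonneg[OF assms(1-3)] assms(5,6) by force
  moreover have "0 \<le> (k * d_plus g a k) * (1 - v)"
    using d_plus_pos[OF assms(1-4)] assms(4,6) by simp
  ultimately show ?thesis by (simp only: mult_minus_left neg_le_0_iff_le)
qed

lemma d_star_gap:
  assumes "1 < k" "0 < d_plus g a k" "d_star g a k < d"
  shows "0 < d" and "2 * sqrt k < k + 1 - k * d_plus g a k / d"
proof -
  have sq_pos: "0 < (1 - 1 / sqrt k)\<^sup>2" using assms(1) by simp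
  then have "0 < d_star g a k" unfolding d_star_def using assms(2) by simp
  then show "0 < d" using assms(3) by simp
  then have "d_plus g a k / d < (1 - 1 / sqrt k)\<^sup>2"
    using assms(3) sq_pos unfolding d_star_def by (simp add: divide_less_eq mult.commute)
  then have "k * (d_plus g a k / d) < k * (1 - 1 / sqrt k)\<^sup>2"
    by (rule mult_strict_left_mono) (use assms(1) in simp)
  also have "k * (1 - 1 / sqrt k)\<^sup>2 = k + 1 - 2 * sqrt k"
    using assms(1) by (simp add: power2_eq_square field_simps)
  finally show "2 * sqrt k < k + 1 - k * d_plus g a k / d" by simp
qed

lemma geometric_decay_from_differences:
  fixes y :: "real \<Rightarrow> real"
  assumes lim: "(y \<longlongrightarrow> 0) at_top"
    and diff: "\<And>\<xi>. \<xi>\<^sub>0 \<le> \<xi> \<Longrightarrow> k * (y \<xi> - y (\<xi> + 1)) \<le> y (\<xi> - 1) - y \<xi>"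
    and "\<xi>\<^sub>0 \<le> \<xi>"
  shows "k * y \<xi> \<le> y (\<xi> - 1)"
proof -
  have telescope: "k * (y \<xi> - y (\<xi> + real m)) \<le> y (\<xi> - 1) - y (\<xi> - 1 + real m)" for m
  proof (induction m)
    case (Suc m)
    have "k * (y (\<xi> + real m) - y (\<xi> + real m + 1)) \<le> y (\<xi> + real m - 1) - y (\<xi> + real m)"
      using diff[of "\<xi> + real m"] \<open>\<xi>\<^sub>0 \<le> \<xi>\<close> by simp
    with Suc.IH show ?case by (simp add: algebra_simps)
  qed simp
  have tail: "(\<lambda>m. y (x + real m)) \<longlonglongrightarrow> 0" for x
    using filterlim_compose[OF lim filterlim_tendsto_add_at_top[OF tendsto_const filterlim_real_sequentially]] .
  have lhs: "(\<lambda>m. k * (y \<xi> - y (\<xi> + real m))) \<longlonglongrightarrow> k * (y \<xi> - 0)"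
    using tail by (intro tendsto_intros)
  have rhs: "(\<lambda>m. y (\<xi> - 1) - y (\<xi> - 1 + real m)) \<longlonglongrightarrow> y (\<xi> - 1) - 0"
    using tail by (intro tendsto_intros)
  have "k * (y \<xi> - 0) \<le> y (\<xi> - 1) - 0"
    using telescope by (intro tendsto_le[OF trivial_limit_sequentially rhs lhs]) simp
  then show ?thesis by simp
qed

lemma exp_weighted_bounded:
  fixes y :: "real \<Rightarrow> real"
  assumes "1 \<le> s" "0 \<le> B" "\<And>\<xi>. y \<xi> \<le> B"
    and decay: "\<And>\<xi>. \<xi>\<^sub>0 \<le> \<xi> \<Longrightarrow> s * y \<xi> \<le> y (\<xi> - 1)"
  shows "y \<xi> * s powr \<xi> \<le> B * s powr \<xi>\<^sub>0"
proof -
  have "\<forall>\<xi>. \<xi> \<le> \<xi>\<^sub>0 + real n \<longrightarrow> y \<xi> * s powr \<xi> \<le> B * s powr \<xi>\<^sub>0" for n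
  proof (induction n)
    case 0
    have "y \<xi> * s powr \<xi> \<le> B * s powr \<xi>\<^sub>0" if "\<xi> \<le> \<xi>\<^sub>0" for \<xi>
      using assms(1-3) that by (intro mult_mono powr_mono) auto
    then show ?case by simp
  next
    case (Suc n)
    have "y \<xi> * s powr \<xi> \<le> B * s powr \<xi>\<^sub>0" if "\<xi> \<le> \<xi>\<^sub>0 + real (Suc n)" for \<xi>
    proof (cases "\<xi> \<le> \<xi>\<^sub>0")
      case False
      have "y \<xi> * s powr \<xi> = (s * y \<xi>) * s powr (\<xi> - 1)"
        using assms(1) by (simp add: powr_diff)
      also have "\<dots> \<le> y (\<xi> - 1) * s powr (\<xi> - 1)"
        using decay[of \<xi>] False by (intro mult_right_mono) auto
      also have "\<dots> \<le> B * s powr \<xi>\<^sub>0"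
        using Suc.IH that by auto
      finally show ?thesis .
    qed (use Suc.IH in auto)
    then show ?case by blast
  qed
  moreover have "\<xi> \<le> \<xi>\<^sub>0 + real (nat \<lceil>\<xi> - \<xi>\<^sub>0\<rceil>)" by linarith
  ultimately show ?thesis by blast
qed

lemma bounded_supersolution_eq_0:
  fixes w :: "real \<Rightarrow> real"
  assumes nonneg: "\<And>\<xi>. 0 \<le> w \<xi>" and bdd: "bdd_above (range w)" and "0 \<le> s" "2 * s < \<beta>"
    and super: "\<And>\<xi>. \<beta> * w \<xi> \<le> s * (w (\<xi> + 1) + w (\<xi> - 1))"
  shows "w \<xi> = 0"
proof -
  define S where "S = (SUP \<xi>. w \<xi>)"
  have le_S: "w x \<le> S" for x unfolding S_def by (rule cSUP_upper[OF UNIV_I bdd])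
  have "\<beta> * w x \<le> 2 * s * S" for x
  proof -
    have "s * (w (x + 1) + w (x - 1)) \<le> s * (S + S)"
      using le_S \<open>0 \<le> s\<close> by (intro mult_left_mono add_mono) auto
    with super[of x] show ?thesis by simp
  qed
  then have "w x \<le> 2 * s * S / \<beta>" for x
    using assms(3,4) by (simp add: le_divide_eq mult.commute)
  then have "S \<le> 2 * s * S / \<beta>" unfolding S_def by (rule cSUP_least[OF UNIV_not_empty])
  then have "(\<beta> - 2 * s) * S \<le> 0"
    using assms(3,4) by (simp add: le_divide_eq algebra_simps)
  then have "S \<le> 0" using assms(4) by (simp add: mult_le_0_iff)
  then show ?thesis using le_S[of \<xi>] nonneg[of \<xi>] by simp
qed

lemma exp_weighted_supersolution_eq_0:
  fixes y :: "real \<Rightarrow> real"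
  assumes "\<And>\<xi>. 0 \<le> y \<xi>" "0 < s" "2 * s < \<beta>"
    and "bdd_above (range (\<lambda>\<xi>. y \<xi> * s powr \<xi>))"
    and super: "\<And>\<xi>. \<beta> * y \<xi> \<le> s\<^sup>2 * y (\<xi> + 1) + y (\<xi> - 1)"
  shows "y \<xi> = 0"
proof -
  have "\<beta> * (y x * s powr x) \<le> s * (y (x + 1) * s powr (x + 1) + y (x - 1) * s powr (x - 1))" for x
  proof -
    have "\<beta> * (y x * s powr x) \<le> (s\<^sup>2 * y (x + 1) + y (x - 1)) * s powr x"
      using super[of x] by (simp add: mult.assoc[symmetric] mult_right_mono)
    also have "\<dots> = s * (y (x + 1) * s powr (x + 1) + y (x - 1) * s powr (x - 1))"
      using \<open>0 < s\<close> by (simp add: powr_add powr_diff power2_eq_square field_simps)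
    finally show ?thesis .
  qed
  then have "y \<xi> * s powr \<xi> = 0"
    using assms(1-4) by (intro bounded_supersolution_eq_0[where s = s and \<beta> = \<beta>]) auto
  then show ?thesis using \<open>0 < s\<close> by simp
qed

lemma tw_solution_range:
  assumes "mono \<Phi>" "tw_solution g a d k c \<Phi>"
  shows "0 \<le> \<Phi> \<xi>" "\<Phi> \<xi> \<le> 1"
proof -
  have "(\<Phi> \<longlongrightarrow> 0) at_bot" "(\<Phi> \<longlongrightarrow> 1) at_top"
    using assms(2) unfolding tw_solution_def by blast+
  moreover have "\<forall>\<^sub>F x in at_bot. \<Phi> x \<le> \<Phi> \<xi>"
    using eventually_le_at_bot[of \<xi>] by eventually_elim (rule monoD[OF assms(1)])
  moreover have "\<forall>\<^sub>F x in at_top. \<Phi> \<xi> \<le> \<Phi> x"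
    using eventually_ge_at_top[of \<xi>] by eventually_elim (rule monoD[OF assms(1)])
  ultimately show "0 \<le> \<Phi> \<xi>" "\<Phi> \<xi> \<le> 1"
    by (simp_all add: tendsto_upperbound tendsto_lowerbound)
qed

lemma mono_deriv_nonneg:
  fixes f :: "real \<Rightarrow> real"
  assumes "mono f" "(f has_real_derivative l) (at x)"
  shows "0 \<le> l"
proof (rule ccontr)
  assume "\<not> 0 \<le> l"
  then obtain e where "0 < e" "\<forall>h > 0. h < e \<longrightarrow> f (x + h) < f x"
    using DERIV_neg_dec_right[OF assms(2)] by auto
  then have "f (x + e / 2) < f x" by simp
  moreover have "f x \<le> f (x + e / 2)" using assms(1) \<open>0 < e\<close> by (simp add: monoD)
  ultimately show False by simp
qed

lemma tw_solution_residual_nonpos: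
  assumes "mono \<Phi>" "tw_solution g a d k c \<Phi>" "0 \<le> c"
  shows "d * (k * \<Phi> (\<xi> + 1) - (k + 1) * \<Phi> \<xi> + \<Phi> (\<xi> - 1)) + g (\<Phi> \<xi>) a \<le> 0"
proof -
  obtain \<Phi>' where "(\<Phi> has_real_derivative \<Phi>' \<xi>) (at \<xi>)"
    and "- c * \<Phi>' \<xi> = d * (k * \<Phi> (\<xi> + 1) - (k + 1) * \<Phi> \<xi> + \<Phi> (\<xi> - 1)) + g (\<Phi> \<xi>) a"
    using assms(2) unfolding tw_solution_def by blast
  moreover from this(1) have "0 \<le> c * \<Phi>' \<xi>"
    using mono_deriv_nonneg[OF assms(1)] assms(3) by simp
  ultimately show ?thesis by simp
qed

lemma tw_solution_supersolution:
  assumes "Hg g" "0 < a" "a < 1" "0 < k" "0 < d"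
    and "mono \<Phi>" "tw_solution g a d k c \<Phi>" "0 \<le> c"
  shows "(k + 1 - k * d_plus g a k / d) * (1 - \<Phi> \<xi>) \<le> k * (1 - \<Phi> (\<xi> + 1)) + (1 - \<Phi> (\<xi> - 1))"
proof -
  have "- (k * d_plus g a k) * (1 - \<Phi> \<xi>) \<le> g (\<Phi> \<xi>) a"
    by (rule d_plus_lower_bound) (use assms(1-4) tw_solution_range[OF assms(6,7)] in auto)
  with tw_solution_residual_nonpos[OF assms(6-8), of \<xi>]
  have "d * ((k + 1) * (1 - \<Phi> \<xi>) - k * (1 - \<Phi> (\<xi> + 1)) - (1 - \<Phi> (\<xi> - 1)))
      \<le> k * d_plus g a k * (1 - \<Phi> \<xi>)"
    by (simp add: algebra_simps)
  then have "(k + 1) * (1 - \<Phi> \<xi>) - k * (1 - \<Phi> (\<xi> + 1)) - (1 - \<Phi> (\<xi> - 1))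
      \<le> k * d_plus g a k * (1 - \<Phi> \<xi>) / d"
    using assms(5) by (simp add: pos_le_divide_eq mult.commute)
  then show ?thesis by (simp add: algebra_simps)
qed

lemma tw_solution_tail_decay:
  assumes "Hg g" "0 < a" "a < 1" "0 < d"
    and "mono \<Phi>" "tw_solution g a d k c \<Phi>" "0 \<le> c"
  obtains \<xi>\<^sub>0 where "\<And>\<xi>. \<xi>\<^sub>0 \<le> \<xi> \<Longrightarrow> k * (1 - \<Phi> \<xi>) \<le> 1 - \<Phi> (\<xi> - 1)"
proof -
  have lim: "(\<Phi> \<longlongrightarrow> 1) at_top"
    using assms(6) unfolding tw_solution_def by blast
  obtain \<xi>\<^sub>0 where beyond: "\<And>\<xi>. \<xi>\<^sub>0 \<le> \<xi> \<Longrightarrow> a < \<Phi> \<xi>"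
    using order_tendstoD(1)[OF lim assms(3)] unfolding eventually_at_top_linorder by blast
  have "((\<lambda>\<xi>. 1 - \<Phi> \<xi>) \<longlongrightarrow> 0) at_top"
    using tendsto_diff[OF tendsto_const lim, of 1] by simp
  moreover have "k * ((1 - \<Phi> \<xi>) - (1 - \<Phi> (\<xi> + 1))) \<le> (1 - \<Phi> (\<xi> - 1)) - (1 - \<Phi> \<xi>)"
    if "\<xi>\<^sub>0 \<le> \<xi>" for \<xi>
  proof -
    have "0 \<le> g (\<Phi> \<xi>) a"
      using Hg_nonneg[OF assms(1-3)] beyond[OF that] tw_solution_range[OF assms(5,6)] by simp
    with tw_solution_residual_nonpos[OF assms(5-7), of \<xi>]
    have "d * (k * \<Phi> (\<xi> + 1) - (k + 1) * \<Phi> \<xi> + \<Phi> (\<xi> - 1)) \<le> 0" by linarith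
    then have "k * \<Phi> (\<xi> + 1) - (k + 1) * \<Phi> \<xi> + \<Phi> (\<xi> - 1) \<le> 0"
      using assms(4) by (simp add: mult_le_0_iff)
    then show ?thesis by (simp add: algebra_simps)
  qed
  ultimately show ?thesis
    using geometric_decay_from_differences[where y = "\<lambda>\<xi>. 1 - \<Phi> \<xi>"] that by blast
qed

theorem theorem2p5:
  fixes g :: "real \<Rightarrow> real \<Rightarrow> real" and a k d c :: real and \<Phi> :: "real \<Rightarrow> real"
  assumes "Hg g" and "0 < a" and "a < 1" and "k > 1" and "d > d_star g a k"
    and "mono \<Phi>" and "tw_solution g a d k c \<Phi>"
  shows "c < 0"
proof (rule ccontr)
  assume "\<not> c < 0"
  then have "0 \<le> c" by simp
  define y where "y \<xi> = 1 - \<Phi> \<xi>" for \<xi>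
  define \<beta> where "\<beta> = k + 1 - k * d_plus g a k / d"
  have y_range: "0 \<le> y \<xi>" "y \<xi> \<le> 1" for \<xi>
    unfolding y_def using tw_solution_range[OF assms(6,7)] by simp_all
  have "0 < d_plus g a k" by (rule d_plus_pos) (use assms(1-4) in auto)
  then have "0 < d" and \<beta>_gap: "2 * sqrt k < \<beta>"
    using d_star_gap[OF assms(4) _ assms(5)] unfolding \<beta>_def by blast+
  have super: "\<beta> * y \<xi> \<le> (sqrt k)\<^sup>2 * y (\<xi> + 1) + y (\<xi> - 1)" for \<xi>
    using tw_solution_supersolution[OF assms(1-3) _ \<open>0 < d\<close> assms(6,7) \<open>0 \<le> c\<close>] assms(4)
    unfolding y_def \<beta>_def by simp
  obtain \<xi>\<^sub>0 where decay_k: "\<And>\<xi>. \<xi>\<^sub>0 \<le> \<xi> \<Longrightarrow> k * y \<xi> \<le> y (\<xi> - 1)"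
    using tw_solution_tail_decay[OF assms(1-3) \<open>0 < d\<close> assms(6,7) \<open>0 \<le> c\<close>] unfolding y_def by blast
  have "sqrt k \<le> k"
    using assms(4) by (smt (verit) le_divide_eq_1_pos real_div_sqrt)
  then have decay: "sqrt k * y \<xi> \<le> y (\<xi> - 1)" if "\<xi>\<^sub>0 \<le> \<xi>" for \<xi>
    using decay_k[OF that] mult_right_mono[OF _ y_range(1)] by (meson order_trans)
  have "y \<xi> * sqrt k powr \<xi> \<le> 1 * sqrt k powr \<xi>\<^sub>0" for \<xi>
    by (rule exp_weighted_bounded[where y = y and s = "sqrt k" and B = 1, OF _ _ y_range(2) decay])
      (use assms(4) in auto)
  then have bdd: "bdd_above (range (\<lambda>\<xi>. y \<xi> * sqrt k powr \<xi>))"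
    by (intro bdd_aboveI2)
  have "y \<xi> = 0" for \<xi>
    by (rule exp_weighted_supersolution_eq_0[OF y_range(1) _ \<beta>_gap bdd super]) (use assms(4) in simp)
  then have "\<Phi> = (\<lambda>_. 1)" unfolding y_def by auto
  moreover have "(\<Phi> \<longlongrightarrow> 0) at_bot" using assms(7) unfolding tw_solution_def by blast
  ultimately show False by (simp add: tendsto_const_iff[OF trivial_limit_at_bot_linorder])
qed

end
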